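(* The Lie algebra $\Lambda(\mathbb{Q}\mathrm{Par})$ is not finitely generated.
   Context: The nonsymmetric operad of partitions $\mathrm{Par}$: $\mathrm{Par}((1))=\{1\}$, and for $m\ge2$, $\mathrm{Par}((m))$ is the set of monomials $\prod_{i=1}^Nx_i^{a_i}$ with $N\ge2$, all $a_i\ge1$, $\sum a_i=m$ (nontrivial order-preserving partitions of $\{1,\dots,m\}$ into consecutive blocks). Partial composition: if $a_1+\dots+a_{l-1}+1\le s\le a_1+\dots+a_l$, then $\left(\prod_{i=1}^Nx_i^{a_i}\right)\circ_s\left(\prod_{k=1}^{N_s}x_k^{b_k}\right)=x_l^{a_l-1+\sum_kb_k}\prod_{i\ne l}x_i^{a_i}$; $1$ is a two-sided unit. $\Lambda(\mathbb{Q}\mathrm{Par})=\bigoplus_{m\ge1}\mathbb{Q}\mathrm{Par}((m))$ with Lie bracket $[c,d]=\sum_{t=1}^{j}d\circ_tc-\sum_{s=1}^{k}c\circ_sd$ for $c\in\mathrm{Par}((k))$, $d\in\mathrm{Par}((j))$, extended bilinearly. *)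

theory Defs
  imports Complex_Main
begin

text \<open>A partition in Par((m)) is encoded as the list [a_1,...,a_N] of exponents of
  the monomial x_1^a_1 ... x_N^a_N (N >= 2, all a_i >= 1, arity = sum).  The unit
  1 in Par((1)) is encoded as the list [1].\<close>

definition is_par :: "nat list \<Rightarrow> bool" where
  "is_par xs \<longleftrightarrow> xs = [1] \<or> (2 \<le> length xs \<and> (\<forall>a\<in>set xs. 1 \<le> a))"

definition par_arity :: "nat list \<Rightarrow> nat" where
  "par_arity xs = sum_list xs"

text \<open>Partial composition c o_s d (s in 1..arity c).  For c a monomial, l is the
  (0-based) index of the block containing s; exponent a_l is replaced by
  a_l - 1 + arity d.  The unit is a two-sided unit.\<close>
definition pcomp :: "nat list \<Rightarrow> nat \<Rightarrow> nat list \<Rightarrow> nat list" where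
  "pcomp c s d =
     (if c = [1] then d
      else (let l = (LEAST l. s \<le> sum_list (take (Suc l) c))
            in c[l := c ! l - 1 + par_arity d]))"

text \<open>Bracket of two basis elements, as a formal Q-linear combination of basis elements:
  [c,d] = sum_{t=1}^{j} d o_t c - sum_{s=1}^{k} c o_s d.\<close>
definition basis_bracket :: "nat list \<Rightarrow> nat list \<Rightarrow> nat list \<Rightarrow> rat" where
  "basis_bracket c d x =
     of_nat (card {t \<in> {1..par_arity d}. pcomp d t c = x})
   - of_nat (card {s \<in> {1..par_arity c}. pcomp c s d = x})"

definition supp :: "(nat list \<Rightarrow> rat) \<Rightarrow> nat list set" where
  "supp f = {c. f c \<noteq> 0}"

definition QPar :: "(nat list \<Rightarrow> rat) set" where
  "QPar = {f. finite (supp f) \<and> (\<forall>c\<in>supp f. is_par c)}"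

definition lie_bracket :: "(nat list \<Rightarrow> rat) \<Rightarrow> (nat list \<Rightarrow> rat) \<Rightarrow> (nat list \<Rightarrow> rat)" where
  "lie_bracket f g =
     (\<lambda>x. \<Sum>c\<in>supp f. \<Sum>d\<in>supp g. f c * g d * basis_bracket c d x)"

inductive_set lie_gen :: "(nat list \<Rightarrow> rat) set \<Rightarrow> (nat list \<Rightarrow> rat) set"
  for S where
  gen: "f \<in> S \<Longrightarrow> f \<in> lie_gen S"
| zero: "(\<lambda>_. 0) \<in> lie_gen S"
| add: "f \<in> lie_gen S \<Longrightarrow> g \<in> lie_gen S \<Longrightarrow> (\<lambda>x. f x + g x) \<in> lie_gen S"
| smult: "f \<in> lie_gen S \<Longrightarrow> (\<lambda>x. r * f x) \<in> lie_gen S"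
| bracket: "f \<in> lie_gen S \<Longrightarrow> g \<in> lie_gen S \<Longrightarrow> lie_bracket f g \<in> lie_gen S"

end

theory Submission
  imports Defs
begin

text \<open>A partial composite has as many blocks as one of its two factors, so every
  monomial occurring in a bracket has the block count of a monomial occurring in one of
  the arguments.  Hence the block counts occurring in the Lie subalgebra generated by a
  set S are among the finitely many occurring in S, whereas Par contains monomials with
  any number of blocks (encoded as list length).\<close>

lemma length_pcomp: "length (pcomp c s d) \<in> {length c, length d}"
  unfolding pcomp_def Let_def by auto

lemma basis_bracket_eq_0:
  assumes "length x \<notin> {length c, length d}"
  shows "basis_bracket c d x = 0"
proof -
  have "{t \<in> {1..par_arity d}. pcomp d t c = x} = {}"
       "{s \<in> {1..par_arity c}. pcomp c s d = x} = {}"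
    using length_pcomp[of d _ c] length_pcomp[of c _ d] assms by auto
  then show ?thesis
    unfolding basis_bracket_def by (simp only: card.empty diff_self)
qed

lemma lie_bracket_eq_0:
  assumes "length x \<notin> length ` supp f \<union> length ` supp g"
  shows "lie_bracket f g x = 0"
  unfolding lie_bracket_def
  using assms by (auto intro!: sum.neutral basis_bracket_eq_0)

lemma length_supp_lie_gen:
  assumes "f \<in> lie_gen S"
  shows "length ` supp f \<subseteq> (\<Union>g\<in>S. length ` supp g)"
  using assms
proof (induction rule: lie_gen.induct)
  case (gen f)
  then show ?case by blast
next
  case zero
  then show ?case by (simp add: supp_def)
next
  case (add f g)
  have "supp (\<lambda>x. f x + g x) \<subseteq> supp f \<union> supp g"
    by (auto simp: supp_def)
  then show ?case
    using add.IH by blast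
next
  case (smult f r)
  have "supp (\<lambda>x. r * f x) \<subseteq> supp f"
    by (auto simp: supp_def)
  then show ?case
    using smult.IH by blast
next
  case (bracket f g)
  have "length x \<in> length ` supp f \<union> length ` supp g" if "x \<in> supp (lie_bracket f g)" for x
    using that lie_bracket_eq_0[of x f g] by (auto simp: supp_def)
  then show ?case
    using bracket.IH by blast
qed

lemma finite_length_supp_QPar:
  assumes "finite S" "S \<subseteq> QPar"
  shows "finite (\<Union>g\<in>S. length ` supp g)"
  using assms by (auto simp: QPar_def)

lemma indicator_replicate_in_QPar:
  assumes "2 \<le> n"
  shows "(\<lambda>y. if y = replicate n 1 then 1 else 0) \<in> QPar"
proof -
  have "supp (\<lambda>y. if y = replicate n 1 then 1 else 0) = {replicate n 1}"
    by (auto simp: supp_def)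
  then show ?thesis
    using assms by (simp add: QPar_def is_par_def)
qed

theorem proposition6p4:
  shows "\<not> (\<exists>S. finite S \<and> S \<subseteq> QPar \<and> lie_gen S = QPar)"
proof
  assume "\<exists>S. finite S \<and> S \<subseteq> QPar \<and> lie_gen S = QPar"
  then obtain S where S: "finite S" "S \<subseteq> QPar" "lie_gen S = QPar"
    by blast
  define L where "L = (\<Union>g\<in>S. length ` supp g)"
  define n where "n = Max (insert 0 L) + 2"
  have "finite L"
    unfolding L_def using S(1,2) by (rule finite_length_supp_QPar)
  then have "n \<notin> L"
    using Max_ge[of "insert 0 L" n] unfolding n_def by fastforce
  define f :: "nat list \<Rightarrow> rat" where "f = (\<lambda>y. if y = replicate n 1 then 1 else 0)"
  have "f \<in> lie_gen S"
    using indicator_replicate_in_QPar[of n] S(3) unfolding f_def n_def by simp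
  then have "length ` supp f \<subseteq> L"
    unfolding L_def by (rule length_supp_lie_gen)
  moreover have "n \<in> length ` supp f"
    by (auto simp: f_def supp_def)
  ultimately show False
    using \<open>n \<notin> L\<close> by blast
qed

end
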